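(* The Fomin–Kirillov algebra $\mathcal{E}_3$ admits no truncated point modules of degree greater than $1$; in particular $\mathcal{P}_2(\mathcal{E}_3)=\emptyset$.
   Context: Over an algebraically closed field $k$, $\mathcal{E}_3$ is the graded algebra generated by degree-$1$ elements $x_{12},x_{13},x_{23}$ subject to $x_{12}^2=x_{13}^2=x_{23}^2=0$, $x_{12}x_{23}-x_{23}x_{13}-x_{13}x_{12}=0$ and $x_{23}x_{12}-x_{13}x_{23}-x_{12}x_{13}=0$. A degree-$d$ truncated point module over a connected graded algebra $A$ generated in degree $1$ is a graded cyclic module generated in degree $0$ with Hilbert series $1+t+\cdots+t^d$; $\mathcal{P}_d(A)$ is the space of such modules. *)

theory Defs
  imports "HOL-Computational_Algebra.Polynomial"
begin

datatype gen = X12 | X13 | X23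

text \<open>Noncommutative polynomials in the generators (elements of the free algebra
  k<x12,x13,x23>), as formal linear combinations of words.  The word [g1,...,gn]
  stands for the monomial g1 g2 ... gn.\<close>
type_synonym 'k ncpoly = "('k \<times> gen list) list"

definition E3_relations :: "'k::field ncpoly list" where
  "E3_relations =
    [ [(1, [X12, X12])],
      [(1, [X13, X13])],
      [(1, [X23, X23])],
      [(1, [X12, X23]), (-1, [X23, X13]), (-1, [X13, X12])],
      [(1, [X23, X12]), (-1, [X13, X23]), (-1, [X12, X13])] ]"

text \<open>A graded module M = M_0 + ... + M_d with every M_j one-dimensional
  (Hilbert series 1 + t + ... + t^d), M_j = 0 for j > d.  Identifying each M_j with k
  (via a choice of basis vector m_j), a graded left module structure over the free
  algebra is given by the degree-one actions: generator g maps m_j to act j g * m_(j+1)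
  for j < d (and M_d to M_(d+1) = 0).\<close>

text \<open>Scalar by which the word w maps M_j to M_(j + length w) (0 if out of range).\<close>
fun word_act :: "nat \<Rightarrow> (nat \<Rightarrow> gen \<Rightarrow> 'k::field) \<Rightarrow> gen list \<Rightarrow> nat \<Rightarrow> 'k" where
  "word_act d act [] j = (if j \<le> d then 1 else 0)"
| "word_act d act (g # w) j =
     (if j + length w < d then act (j + length w) g * word_act d act w j else 0)"

definition annihilates :: "nat \<Rightarrow> (nat \<Rightarrow> gen \<Rightarrow> 'k::field) \<Rightarrow> 'k ncpoly \<Rightarrow> bool" where
  "annihilates d act p \<longleftrightarrow>
     (\<forall>j n. (\<Sum>(c, w) \<leftarrow> filter (\<lambda>(c, w). length w = n) p. c * word_act d act w j) = 0)"

text \<open>Truncated point module of degree d over E_3: the graded module above is a module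
  over E_3 (i.e. killed by the defining relations, hence by the two-sided ideal they
  generate) and is cyclic generated in degree 0 (M_j = (E_3)_j M_0 for all j \<le> d).\<close>
definition is_truncated_point_module_E3 :: "nat \<Rightarrow> (nat \<Rightarrow> gen \<Rightarrow> 'k::field) \<Rightarrow> bool" where
  "is_truncated_point_module_E3 d act \<longleftrightarrow>
     (\<forall>r \<in> set E3_relations. annihilates d act r) \<and>
     (\<forall>j \<le> d. \<exists>w. length w = j \<and> word_act d act w 0 \<noteq> 0)"

definition P_E3 :: "nat \<Rightarrow> (nat \<Rightarrow> gen \<Rightarrow> 'k::field) set" where
  "P_E3 d = {act. is_truncated_point_module_E3 d act}"

end

theory Submission
  imports Defs
begin

text \<open>Let \<open>a\<close> and \<open>b\<close> be the actions of the generators \<open>M\<^sub>0 \<rightarrow> M\<^sub>1\<close> and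
  \<open>M\<^sub>1 \<rightarrow> M\<^sub>2\<close> of a truncated point module of degree at least 2.  Cyclicity makes both
  nonzero, while the five quadratic relations of E_3 become bilinear equations in
  \<open>a\<close> and \<open>b\<close>; a case analysis on the support of \<open>a\<close> shows that they force \<open>b = 0\<close>.\<close>

text \<open>The word \<open>g h\<close> acts on degree \<open>j\<close> by \<open>b g * a h\<close>, where \<open>a\<close> and \<open>b\<close> are the actions
  on degrees \<open>j\<close> and \<open>j + 1\<close>; this turns the relations of E_3 into the equations below.\<close>

definition E3_relation_locus :: "(gen \<Rightarrow> 'k::field) \<Rightarrow> (gen \<Rightarrow> 'k) \<Rightarrow> bool" where
  "E3_relation_locus a b \<longleftrightarrow>
     b X12 * a X12 = 0 \<and> b X13 * a X13 = 0 \<and> b X23 * a X23 = 0 \<and>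
     b X12 * a X23 - b X23 * a X13 - b X13 * a X12 = 0 \<and>
     b X23 * a X12 - b X13 * a X23 - b X12 * a X13 = 0"

lemma E3_relation_locus_trivial:
  assumes "E3_relation_locus a b"
  shows "a = (\<lambda>_. 0) \<or> b = (\<lambda>_. 0)"
proof -
  have "b X12 = 0 \<and> b X13 = 0 \<and> b X23 = 0" if "a \<noteq> (\<lambda>_. 0)"
  proof -
    have rel: "b X12 * a X12 = 0" "b X13 * a X13 = 0" "b X23 * a X23 = 0"
      "b X12 * a X23 - b X23 * a X13 - b X13 * a X12 = 0"
      "b X23 * a X12 - b X13 * a X23 - b X12 * a X13 = 0"
      using assms unfolding E3_relation_locus_def by auto
    have "a X12 \<noteq> 0 \<or> a X13 \<noteq> 0 \<or> a X23 \<noteq> 0"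
      using that by (metis gen.exhaust)
    then consider "a X12 \<noteq> 0" | "a X12 = 0" "a X13 \<noteq> 0" | "a X12 = 0" "a X13 = 0" "a X23 \<noteq> 0"
      by blast
    then show ?thesis
    proof cases
      case 1
      then have "b X12 = 0" using rel(1) by simp
      moreover have "b X13 = 0"
      proof (rule ccontr)
        assume "b X13 \<noteq> 0"
        with rel(2) have "a X13 = 0" by simp
        with rel(4) \<open>b X12 = 0\<close> 1 \<open>b X13 \<noteq> 0\<close> show False by simp
      qed
      moreover have "b X23 = 0" using rel(5) 1 \<open>b X12 = 0\<close> \<open>b X13 = 0\<close> by simp
      ultimately show ?thesis by simp
    next
      case 2
      then have "b X13 = 0" using rel(2) by simp
      moreover have "b X12 = 0" using rel(5) 2 \<open>b X13 = 0\<close> by simp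
      moreover have "b X23 = 0" using rel(4) 2 \<open>b X13 = 0\<close> \<open>b X12 = 0\<close> by simp
      ultimately show ?thesis by simp
    next
      case 3
      then show ?thesis using rel by simp
    qed
  qed
  then show ?thesis by (metis gen.exhaust)
qed

lemma word_act_two:
  "word_act d act [g, h] j = (if Suc j < d then act (Suc j) g * act j h else 0)"
  by simp

lemma annihilates_homogeneous:
  assumes "annihilates d act p" and "\<forall>(c, w) \<in> set p. length w = n"
  shows "(\<Sum>(c, w) \<leftarrow> p. c * word_act d act w j) = 0"
proof -
  have "filter (\<lambda>(c, w). length w = n) p = p"
    using assms(2) by (auto intro: filter_True)
  then show ?thesis
    using assms(1) unfolding annihilates_def by metis
qed

lemma E3_relation_locus_if_annihilates:
  fixes act :: "nat \<Rightarrow> gen \<Rightarrow> 'k::field"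
  assumes "\<forall>r \<in> set E3_relations. annihilates d act r" and "Suc j < d"
  shows "E3_relation_locus (act j) (act (Suc j))"
proof -
  have "list_all (\<lambda>r. (\<Sum>(c, w) \<leftarrow> r. c * word_act d act w j) = 0) E3_relations"
    unfolding list_all_iff
  proof
    fix r :: "'k ncpoly" assume "r \<in> set E3_relations"
    then show "(\<Sum>(c, w) \<leftarrow> r. c * word_act d act w j) = 0"
      using assms(1) by (intro annihilates_homogeneous[where n = 2]) (auto simp: E3_relations_def)
  qed
  then show ?thesis
    using assms(2) unfolding E3_relations_def E3_relation_locus_def
    by (simp add: algebra_simps)
qed

theorem proposition2p1:
  fixes d :: nat
  assumes "d > 1"
  shows "(P_E3 d :: (nat \<Rightarrow> gen \<Rightarrow> 'k::alg_closed_field) set) = {}"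
proof (rule ccontr)
  assume "(P_E3 d :: (nat \<Rightarrow> gen \<Rightarrow> 'k) set) \<noteq> {}"
  then obtain act :: "nat \<Rightarrow> gen \<Rightarrow> 'k"
    where rel: "\<forall>r \<in> set E3_relations. annihilates d act r"
      and cyclic: "\<forall>j \<le> d. \<exists>w. length w = j \<and> word_act d act w 0 \<noteq> 0"
    unfolding P_E3_def is_truncated_point_module_E3_def by blast
  obtain w where "length w = 2" and w: "word_act d act w 0 \<noteq> 0"
    using cyclic[rule_format, of 2] assms by auto
  then obtain g h where "w = [g, h]"
    by (auto simp: numeral_2_eq_2 length_Suc_conv)
  with w assms have "act 1 g \<noteq> 0" and "act 0 h \<noteq> 0"
    by (auto simp: word_act_two)
  moreover have "E3_relation_locus (act 0) (act 1)"
    using E3_relation_locus_if_annihilates[OF rel] assms by simp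
  ultimately show False
    using E3_relation_locus_trivial by metis
qed

end
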